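(* Let $m\ge2$ and $G=\langle x_1,x_2\mid c_{12}^m,\ \overline{c_{12}^{(x_1)}}\,c_{12}^{a_1},\ \overline{c_{12}^{(x_2)}}\,c_{12}^{a_2}\rangle$ with $a_1,a_2$ coprime to $m$, whose commutator subgroup $C$ is cyclic of order $m$ generated by $c_{12}$, and let $Z_{CG}=Z(G)\cap C$. If $\{x_1,x_2\}\subset\mathcal C_G(C)$ (equivalently $a_1=a_2=1$), then $Z_{CG}=C$. Otherwise, $Z_{CG}$ is non-trivial if and only if $\gcd(a_1-1,a_2-1,m)\neq1$.
   Context: Notation: $\bar g=g^{-1}$, $c_{gh}=\bar g\,\bar h\,g\,h$, $c^{(g)}=\bar g\,c\,g$, $c_{12}=c_{x_1x_2}$; $\mathcal C_G(C)$ is the centralizer of $C$ and $Z(G)$ the center of $G$. *)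

theory Defs
  imports "HOL-Algebra.Algebra"
begin

definition comm :: "('a, 'b) monoid_scheme \<Rightarrow> 'a \<Rightarrow> 'a \<Rightarrow> 'a" where
  "comm G g h = inv\<^bsub>G\<^esub> g \<otimes>\<^bsub>G\<^esub> inv\<^bsub>G\<^esub> h \<otimes>\<^bsub>G\<^esub> g \<otimes>\<^bsub>G\<^esub> h"

definition conj :: "('a, 'b) monoid_scheme \<Rightarrow> 'a \<Rightarrow> 'a \<Rightarrow> 'a" where
  "conj G c g = inv\<^bsub>G\<^esub> g \<otimes>\<^bsub>G\<^esub> c \<otimes>\<^bsub>G\<^esub> g"

definition group_center :: "('a, 'b) monoid_scheme \<Rightarrow> 'a set" where
  "group_center G = {z \<in> carrier G. \<forall>g \<in> carrier G. z \<otimes>\<^bsub>G\<^esub> g = g \<otimes>\<^bsub>G\<^esub> z}"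

definition centralizer :: "('a, 'b) monoid_scheme \<Rightarrow> 'a set \<Rightarrow> 'a set" where
  "centralizer G S = {g \<in> carrier G. \<forall>s \<in> S. g \<otimes>\<^bsub>G\<^esub> s = s \<otimes>\<^bsub>G\<^esub> g}"

end

theory Submission
  imports Defs
begin

text \<open>Conjugation by the generator x_i acts on the cyclic group C = <c>, c = c_12, of order m
  as c \<mapsto> c^a_i, so c^k commutes with x_i iff m divides (a_i - 1) k. As x_1 and x_2 generate G,
  c^k is central iff m divides both (a_1 - 1) k and (a_2 - 1) k, and some k not divisible by m
  does this iff d = gcd(a_1 - 1, a_2 - 1, m) \<noteq> 1 (take k = m / d). Neither c^m = 1, nor the
  coprimality of a_i and m, nor the case distinction of the second claim is needed.\<close>

lemma ex_non_multiple_annihilated_iff_gcd_ne_1: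
  fixes a b m :: int
  assumes "m > 0"
  shows "(\<exists>k. \<not> m dvd k \<and> m dvd a * k \<and> m dvd b * k) \<longleftrightarrow> gcd (gcd a b) m \<noteq> 1"
proof
  assume "\<exists>k. \<not> m dvd k \<and> m dvd a * k \<and> m dvd b * k"
  then obtain k where k: "\<not> m dvd k" "m dvd a * k" "m dvd b * k" by blast
  then have "m dvd gcd a b * k"
    by (metis dvd_mult2 gcd_greatest mult_gcd_right)
  with k(1) show "gcd (gcd a b) m \<noteq> 1"
    by (metis coprime_dvd_mult_right_iff coprime_iff_gcd_eq_1 gcd.commute)
next
  define d where "d = gcd (gcd a b) m"
  assume "gcd (gcd a b) m \<noteq> 1"
  then have "d > 1"
    using assms gcd_pos_int[of "gcd a b" m] unfolding d_def by linarith
  have "d dvd a" "d dvd b" "d dvd m"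
    unfolding d_def by (meson dvd_trans gcd_dvd1 gcd_dvd2)+
  then obtain k where m: "m = d * k"
    by blast
  have "0 < k"
    using m \<open>d > 1\<close> assms by (simp add: zero_less_mult_iff)
  moreover have "k < m"
    using m \<open>d > 1\<close> \<open>0 < k\<close> by simp
  ultimately have "\<not> m dvd k"
    by (rule zdvd_not_zless)
  moreover have "m dvd a * k" "m dvd b * k"
    using \<open>d dvd a\<close> \<open>d dvd b\<close> unfolding m by (simp_all add: mult_dvd_mono)
  ultimately show "\<exists>k. \<not> m dvd k \<and> m dvd a * k \<and> m dvd b * k" by blast
qed

lemma (in group) subgroup_centralizer:
  assumes "S \<subseteq> carrier G"
  shows "subgroup (centralizer G S) G"
proof
  show "centralizer G S \<subseteq> carrier G" "\<one> \<in> centralizer G S"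
    using assms by (auto simp: centralizer_def)
next
  fix g h assume "g \<in> centralizer G S" "h \<in> centralizer G S"
  then have g: "g \<in> carrier G" "\<forall>s\<in>S. g \<otimes> s = s \<otimes> g"
    and h: "h \<in> carrier G" "\<forall>s\<in>S. h \<otimes> s = s \<otimes> h"
    unfolding centralizer_def by auto
  have "g \<otimes> h \<otimes> s = s \<otimes> (g \<otimes> h)" if s: "s \<in> S" for s
  proof -
    have "g \<otimes> h \<otimes> s = g \<otimes> (s \<otimes> h)"
      using g h s assms by (auto simp: m_assoc)
    also have "\<dots> = s \<otimes> (g \<otimes> h)"
      using g h s assms by (auto simp flip: m_assoc)
    finally show ?thesis .
  qed
  with g h show "g \<otimes> h \<in> centralizer G S"
    unfolding centralizer_def by auto
next
  fix g assume "g \<in> centralizer G S"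
  then have g: "g \<in> carrier G" "\<forall>s\<in>S. g \<otimes> s = s \<otimes> g"
    unfolding centralizer_def by auto
  have "inv g \<otimes> s = s \<otimes> inv g" if s: "s \<in> S" for s
  proof -
    have sc: "s \<in> carrier G"
      using s assms by auto
    have "inv g \<otimes> s = inv g \<otimes> (s \<otimes> g) \<otimes> inv g"
      using g(1) sc by (simp add: m_assoc)
    also have "\<dots> = inv g \<otimes> (g \<otimes> s) \<otimes> inv g"
      using g s by simp
    also have "\<dots> = s \<otimes> inv g"
      using g(1) sc by (simp flip: m_assoc)
    finally show ?thesis .
  qed
  with g show "inv g \<in> centralizer G S"
    unfolding centralizer_def by auto
qed

lemma (in group) center_iff_commutes_with_generators:
  assumes gen: "generate G S = carrier G" and z: "z \<in> carrier G"
  shows "z \<in> group_center G \<longleftrightarrow> (\<forall>s\<in>S. z \<otimes> s = s \<otimes> z)"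
proof -
  have S: "S \<subseteq> carrier G"
    using generate.incl[of _ S G] gen by blast
  have "z \<in> group_center G \<longleftrightarrow> carrier G \<subseteq> centralizer G {z}"
    using z unfolding group_center_def centralizer_def by fastforce
  also have "\<dots> \<longleftrightarrow> S \<subseteq> centralizer G {z}"
    using S z generate_subgroup_incl[OF _ subgroup_centralizer, of S "{z}"] unfolding gen by blast
  also have "\<dots> \<longleftrightarrow> (\<forall>s\<in>S. z \<otimes> s = s \<otimes> z)"
    using S unfolding centralizer_def by auto
  finally show ?thesis .
qed

lemma (in group) int_pow_conj:
  assumes x: "x \<in> carrier G" and c: "c \<in> carrier G"
  shows "inv x \<otimes> c [^] (k::int) \<otimes> x = (inv x \<otimes> c \<otimes> x) [^] k"
proof -
  have "(\<lambda>y. inv x \<otimes> y \<otimes> x) \<in> hom G G"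
    using x by (intro homI) (simp_all add: m_assoc flip: m_assoc[of x "inv x"])
  with c show ?thesis
    using hom_int_pow group_axioms by metis
qed

lemma (in group) int_pow_commutes_iff_ord_dvd:
  assumes x: "x \<in> carrier G" and c: "c \<in> carrier G"
    and conj: "inv x \<otimes> c \<otimes> x = c [^] (a::int)"
  shows "c [^] (k::int) \<otimes> x = x \<otimes> c [^] k \<longleftrightarrow> int (ord c) dvd (a - 1) * k"
proof -
  have "c [^] k \<otimes> x = x \<otimes> c [^] k \<longleftrightarrow> inv x \<otimes> c [^] k \<otimes> x = c [^] k"
    using x c by (metis inv_solve_left m_assoc m_closed inv_closed int_pow_closed)
  also have "inv x \<otimes> c [^] k \<otimes> x = c [^] (a * k)"
    using int_pow_conj[OF x c] conj c by (simp add: int_pow_pow)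
  also have "c [^] (a * k) = c [^] k \<longleftrightarrow> int (ord c) dvd k - a * k"
    using c by (rule int_pow_eq)
  finally show ?thesis
    by (simp add: dvd_diff_commute left_diff_distrib)
qed

lemma (in group) center_inter_cyclic_ne_trivial_iff:
  assumes c: "c \<in> carrier G"
  shows "group_center G \<inter> generate G {c} \<noteq> {\<one>} \<longleftrightarrow>
         (\<exists>k::int. \<not> int (ord c) dvd k \<and> c [^] k \<in> group_center G)"
proof -
  have "\<one> \<in> group_center G \<inter> generate G {c}"
    using c unfolding group_center_def by (simp add: generate.one)
  then have "group_center G \<inter> generate G {c} \<noteq> {\<one>} \<longleftrightarrow>
             (\<exists>k::int. c [^] k \<noteq> \<one> \<and> c [^] k \<in> group_center G)"
    unfolding generate_pow[OF c] by blast
  then show ?thesis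
    by (simp add: int_pow_eq_id[OF c])
qed

lemma (in group) subset_center_if_generators_centralize:
  assumes gen: "generate G S = carrier G" and H: "H \<subseteq> carrier G"
    and S: "S \<subseteq> centralizer G H"
  shows "H \<subseteq> group_center G"
proof
  fix z assume "z \<in> H"
  with S have "\<forall>s\<in>S. z \<otimes> s = s \<otimes> z"
    unfolding centralizer_def by auto
  with H \<open>z \<in> H\<close> show "z \<in> group_center G"
    using center_iff_commutes_with_generators[OF gen] by auto
qed

lemma (in group) center_inter_cyclic_ne_trivial_iff_gcd:
  assumes gen: "generate G {x1, x2} = carrier G" and x1: "x1 \<in> carrier G" and x2: "x2 \<in> carrier G"
    and c: "c \<in> carrier G" and ord: "ord c \<noteq> 0"
    and conj1: "inv x1 \<otimes> c \<otimes> x1 = c [^] a1" and conj2: "inv x2 \<otimes> c \<otimes> x2 = c [^] a2"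
  shows "group_center G \<inter> generate G {c} \<noteq> {\<one>} \<longleftrightarrow>
         gcd (gcd (a1 - 1) (a2 - 1)) (int (ord c)) \<noteq> 1"
proof -
  have "c [^] k \<in> group_center G \<longleftrightarrow>
        int (ord c) dvd (a1 - 1) * k \<and> int (ord c) dvd (a2 - 1) * k" for k :: int
    using center_iff_commutes_with_generators[OF gen int_pow_closed[OF c]]
      int_pow_commutes_iff_ord_dvd[OF x1 c conj1] int_pow_commutes_iff_ord_dvd[OF x2 c conj2]
    by simp
  then show ?thesis
    using center_inter_cyclic_ne_trivial_iff[OF c] ex_non_multiple_annihilated_iff_gcd_ne_1 ord
    by simp
qed

theorem corollary14p2:
  fixes G :: "('g, 'b) monoid_scheme" and x1 x2 :: 'g and m :: nat and a1 a2 :: int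
  assumes grp: "group G"
    and x1: "x1 \<in> carrier G" and x2: "x2 \<in> carrier G"
    and gen: "generate G {x1, x2} = carrier G"
    and m: "m \<ge> 2"
    and cop1: "coprime a1 (int m)" and cop2: "coprime a2 (int m)"
    and r0: "comm G x1 x2 [^]\<^bsub>G\<^esub> m = \<one>\<^bsub>G\<^esub>"
    and r1: "inv\<^bsub>G\<^esub> (conj G (comm G x1 x2) x1) \<otimes>\<^bsub>G\<^esub> (comm G x1 x2 [^]\<^bsub>G\<^esub> a1) = \<one>\<^bsub>G\<^esub>"
    and r2: "inv\<^bsub>G\<^esub> (conj G (comm G x1 x2) x2) \<otimes>\<^bsub>G\<^esub> (comm G x1 x2 [^]\<^bsub>G\<^esub> a2) = \<one>\<^bsub>G\<^esub>"
    and C: "derived G (carrier G) = generate G {comm G x1 x2}"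
    and ordc: "group.ord G (comm G x1 x2) = m"
  shows "({x1, x2} \<subseteq> centralizer G (derived G (carrier G)) \<longrightarrow>
            group_center G \<inter> derived G (carrier G) = derived G (carrier G))
       \<and> (\<not> {x1, x2} \<subseteq> centralizer G (derived G (carrier G)) \<longrightarrow>
            (group_center G \<inter> derived G (carrier G) \<noteq> {\<one>\<^bsub>G\<^esub>} \<longleftrightarrow>
             gcd (gcd (a1 - 1) (a2 - 1)) (int m) \<noteq> 1))"
proof -
  interpret group G by (fact grp)
  define c where "c = comm G x1 x2"
  have c: "c \<in> carrier G"
    unfolding c_def comm_def using x1 x2 by simp
  have "conj G c x1 = c [^]\<^bsub>G\<^esub> a1" "conj G c x2 = c [^]\<^bsub>G\<^esub> a2"
    using r1 r2 x1 x2 c unfolding c_def[symmetric] conj_def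
    by (metis inv_equality inv_inv m_closed inv_closed int_pow_closed)+
  then have "group_center G \<inter> derived G (carrier G) \<noteq> {\<one>\<^bsub>G\<^esub>} \<longleftrightarrow>
             gcd (gcd (a1 - 1) (a2 - 1)) (int m) \<noteq> 1"
    using center_inter_cyclic_ne_trivial_iff_gcd[OF gen x1 x2 c] ordc m
    unfolding C c_def[symmetric] conj_def by simp
  moreover have "derived G (carrier G) \<subseteq> carrier G"
    using c unfolding C c_def[symmetric] by (simp add: generate_incl)
  ultimately show ?thesis
    using subset_center_if_generators_centralize[OF gen] by blast
qed

end
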